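(* Let $F$ and $\tau=\tau_F$ be as in the context, and let $\tau_{\mathbf n}:=\widehat\tau_{\mathbf n}$ be the coefficients of the $d$-fold Walsh series generating $\tau$. Let $\sum_{\mathbf n\in\mathbb N_0^d}\psi_{\mathbf n}W_{\mathbf n}$ be a $d$-fold Walsh series which converges to zero by rectangles (or by cubes) at every point of $\mathbb G^d\setminus F$, and suppose $\psi_{\mathbf n}=o(\tau_{\mathbf n})$ as $\max_jn^j\to\infty$, i.e. there is a function $\varepsilon(\mathbf n)\to0$ as $\max_jn^j\to\infty$ with $|\psi_{\mathbf n}|\le\varepsilon(\mathbf n)|\tau_{\mathbf n}|$. Then $\psi_{\mathbf n}=0$ for all $\mathbf n$.
   Context: Fix an integer $d\ge 2$. $\mathbb G$ is the dyadic group: sequences $g=(g_k)_{k\ge0}$, $g_k\in\{0,1\}$, with coordinatewise addition mod 2 ($\oplus$) and product topology; $\mathbb G^d$ its $d$-th power, $\mu$ the normalized Haar measure. For $n\in\mathbb N_0$, $n=\sum_kn_k2^k$, $n_k\in\{0,1\}$. Dyadic interval of rank $k$: $\Delta^{(k)}_m=\{g: g_t=m_{k-1-t},\ 0\le t<k\}$; dyadic cube $\Delta^{(k)}_{\mathbf m}=\prod_l\Delta^{(k)}_{m^l}$, $\mathbf m\in\{0,\dots,2^k-1\}^d$. Vector order coordinatewise, $\mathbf 1=(1,\dots,1)$. Walsh functions $W_n(g)=\prod_k(-1)^{g_kn_k}$, $W_{\mathbf n}(\mathbf g)=\prod_lW_{n^l}(g^l)$; $W^{(k)}_{\mathbf n\mathbf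 m}$ is the constant value of $W_{\mathbf n}$ on $\Delta^{(k)}_{\mathbf m}$ ($\mathbf n,\mathbf m<2^k\mathbf 1$); $R_{k\mathbf 1}:=W_{2^k\mathbf 1}$. Partial sums of $\sum a_{\mathbf n}W_{\mathbf n}$: $S_{\mathbf N}=\sum_{\mathbf n<\mathbf N}a_{\mathbf n}W_{\mathbf n}$; convergence by rectangles means $S_{\mathbf N}(\mathbf g)\to S$ as $\min_jN^j\to\infty$, by cubes means $S_{N\mathbf 1}(\mathbf g)\to S$ as $N\to\infty$. Quasimeasure: $\tau$ on dyadic cubes with $\tau(\Delta^{(k)}_{\mathbf m})=\sum_{\boldsymbol\sigma\in\{0,1\}^d}\tau(\Delta^{(k+1)}_{2\mathbf m+\boldsymbol\sigma})$; $\widehat\tau_{\mathbf n}=\sum_{\mathbf m<2^k\mathbf 1}W^{(k)}_{\mathbf n\mathbf m}\tau(\Delta^{(k)}_{\mathbf m})$ for $\mathbf n<2^k\mathbf 1$; the series $\sum\widehat\tau_{\mathbf n}W_{\mathbf n}$ generates $\tau$. For nonempty closed $E$, $\tau_E$ is the unique nonnegative quasimeasure with $\tau_E(\mathbb G^d)=1$, $\tau_E(\Delta)=0$ iff $\Delta\cap E=\emptyset$, which splits the value of any cube meeting $E$ equally among those of its $2^d$ children meeting $E$. The set $F$: $m_1=0$, $m_{s+1}=2(2m_s+1)$; $F_s=\bigcup_{\mathbf m,\mathbf m'<2^{m_s}\mathbf 1}\{\mathbf g\in\Delta^{(2m_s)}_{2^{m_s}\mathbf m+\mathbf m'}: R_{2m_s\mathbf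 1}(\mathbf g)=W^{(m_s)}_{\mathbf m\mathbf m'}\}$; $F=\bigcap_{s\ge1}F_s$. *)

theory Defs
  imports "HOL-Analysis.Analysis"
begin

text \<open>Dimension d is CARD('d) for a finite index type 'd.
 A point of the dyadic group G is a 0/1 sequence, encoded as nat => bool
 (True = 1). A point of G^d is a function 'd => (nat => bool).
 Multi-indices in N_0^d are functions 'd => nat.\<close>

type_synonym dyad = "nat \<Rightarrow> bool"

text \<open>Walsh function W_n(g) = prod_k (-1)^(g_k n_k).\<close>
definition walsh :: "nat \<Rightarrow> dyad \<Rightarrow> real" where
  "walsh n g = (-1) ^ card {k. bit n k \<and> g k}"

definition walshd :: "('d::finite \<Rightarrow> nat) \<Rightarrow> ('d \<Rightarrow> dyad) \<Rightarrow> real" where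
  "walshd n g = (\<Prod>l\<in>UNIV. walsh (n l) (g l))"

definition dint :: "nat \<Rightarrow> nat \<Rightarrow> dyad set" where
  "dint k m = {g. \<forall>t<k. g t = bit m (k - 1 - t)}"

definition dcube :: "nat \<Rightarrow> ('d::finite \<Rightarrow> nat) \<Rightarrow> ('d \<Rightarrow> dyad) set" where
  "dcube k m = {g. \<forall>l. g l \<in> dint k (m l)}"

definition idx :: "nat \<Rightarrow> ('d::finite \<Rightarrow> nat) set" where
  "idx k = {m. \<forall>l. m l < 2 ^ k}"

definition cube_pt :: "nat \<Rightarrow> ('d::finite \<Rightarrow> nat) \<Rightarrow> ('d \<Rightarrow> dyad)" where
  "cube_pt k m = (\<lambda>l t. t < k \<and> bit (m l) (k - 1 - t))"

text \<open>W^(k)_{n m}: constant value of W_n on Delta^(k)_m.\<close>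
definition Wk :: "nat \<Rightarrow> ('d::finite \<Rightarrow> nat) \<Rightarrow> ('d \<Rightarrow> nat) \<Rightarrow> real" where
  "Wk k n m = walshd n (cube_pt k m)"

definition Rk :: "nat \<Rightarrow> ('d::finite \<Rightarrow> dyad) \<Rightarrow> real" where
  "Rk k g = walshd (\<lambda>_. 2 ^ k) g"

text \<open>The quasimeasure tau_E, given on the cube Delta^(k)_m as tauE E k m:
 total mass 1, zero on cubes missing E, and each cube meeting E splits its
 value equally among its 2^d children meeting E.\<close>
fun tauE :: "('d::finite \<Rightarrow> dyad) set \<Rightarrow> nat \<Rightarrow> ('d \<Rightarrow> nat) \<Rightarrow> real" where
  "tauE E 0 m = 1"
| "tauE E (Suc k) m =
     (if dcube (Suc k) m \<inter> E = {} then 0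
      else tauE E k (\<lambda>l. m l div 2) /
        real (card {\<sigma> :: 'd \<Rightarrow> nat. (\<forall>l. \<sigma> l < 2) \<and>
                 dcube (Suc k) (\<lambda>l. 2 * (m l div 2) + \<sigma> l) \<inter> E \<noteq> {}}))"

text \<open>Fourier-Walsh coefficients of a quasimeasure given on cubes, computed
 at the least rank k with n < 2^k 1.\<close>
definition rank_of :: "('d::finite \<Rightarrow> nat) \<Rightarrow> nat" where
  "rank_of n = (LEAST k. \<forall>l. n l < 2 ^ k)"

definition qhat :: "(nat \<Rightarrow> ('d::finite \<Rightarrow> nat) \<Rightarrow> real) \<Rightarrow> ('d \<Rightarrow> nat) \<Rightarrow> real" where
  "qhat \<tau> n = (let k = rank_of n in \<Sum>m\<in>idx k. Wk k n m * \<tau> k m)"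

text \<open>The sequence m_s (s >= 1) is ms (s - 1): m_1 = 0, m_(s+1) = 2(2 m_s + 1).\<close>
fun ms :: "nat \<Rightarrow> nat" where
  "ms 0 = 0"
| "ms (Suc s) = 2 * (2 * ms s + 1)"

definition Fs :: "nat \<Rightarrow> ('d::finite \<Rightarrow> dyad) set" where
  "Fs q = (\<Union>m\<in>idx q. \<Union>m'\<in>idx q.
      {g \<in> dcube (2 * q) (\<lambda>l. 2 ^ q * m l + m' l). Rk (2 * q) g = Wk q m m'})"

definition Fset :: "('d::finite \<Rightarrow> dyad) set" where
  "Fset = (\<Inter>s. Fs (ms s))"

definition psum :: "(('d::finite \<Rightarrow> nat) \<Rightarrow> real) \<Rightarrow> ('d \<Rightarrow> nat) \<Rightarrow> ('d \<Rightarrow> dyad) \<Rightarrow> real" where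
  "psum a N g = (\<Sum>n\<in>{n. \<forall>l. n l < N l}. a n * walshd n g)"

definition conv_rect :: "(('d::finite \<Rightarrow> nat) \<Rightarrow> real) \<Rightarrow> ('d \<Rightarrow> dyad) \<Rightarrow> real \<Rightarrow> bool" where
  "conv_rect a g S \<longleftrightarrow>
     (\<forall>e>0. \<exists>M. \<forall>N. (\<forall>l. M \<le> N l) \<longrightarrow> \<bar>psum a N g - S\<bar> < e)"

definition conv_cube :: "(('d::finite \<Rightarrow> nat) \<Rightarrow> real) \<Rightarrow> ('d \<Rightarrow> dyad) \<Rightarrow> real \<Rightarrow> bool" where
  "conv_cube a g S \<longleftrightarrow> (\<lambda>N. psum a (\<lambda>_. N) g) \<longlonglongrightarrow> S"

end

theory Submission
  imports Defs
begin

text \<open>Write \<open>A\<^sub>k\<close> for the partial sum of the series over the indices below \<open>2\<^sup>k\<close>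
  (\<open>dyadic_psum \<psi> k\<close>); it is constant on the dyadic cubes of rank \<open>k\<close>, and its values on
  the \<open>2\<^sup>d\<close> children of a cube add up to \<open>2\<^sup>d\<close> times its value on the cube. Hence a nonzero
  value on a cube missing \<open>F\<close> would persist along a nested chain of subcubes, contradicting
  \<open>A\<^sub>k \<rightarrow> 0\<close> off \<open>F\<close>: so \<open>A\<^sub>k\<close> vanishes on every cube missing \<open>F\<close>.

  Since \<open>\<tau>\<^sub>F\<close> is uniform on the children of a cube that meet \<open>F\<close>, and these are all children
  or, at the levels \<open>2 m\<^sub>s\<close>, a parity class, the coefficients \<open>\<tau>\<^sub>n\<close> of level \<open>k\<close> whose top
  binary digits are not \<open>0\<close> vanish, except for the digits \<open>(1,\<dots>,1)\<close> at the levels \<open>2 m\<^sub>s\<close>.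
  As \<open>\<psi>\<^sub>n = o(\<tau>\<^sub>n)\<close>, the same holds for \<open>\<psi>\<close>, so \<open>A\<^sub>k\<^sub>+\<^sub>1\<close> is constant on the children
  meeting \<open>F\<close>, and induction on \<open>k\<close> gives \<open>A\<^sub>k = \<psi>\<^sub>0 2\<^sup>d\<^sup>k \<tau>\<^sub>F\<close> on cubes of rank \<open>k\<close>.
  Walsh inversion yields \<open>\<psi>\<^sub>n = \<psi>\<^sub>0 \<tau>\<^sub>n\<close>. If \<open>\<psi>\<^sub>0 \<noteq> 0\<close>, then \<open>\<psi>\<^sub>0 \<tau>\<^sub>n = o(\<tau>\<^sub>n)\<close> forces
  \<open>\<psi>\<^sub>n = 0\<close> beyond some level \<open>2 m\<^sub>s\<close>; then \<open>A\<close> takes the same value on a cube meeting \<open>F\<close>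
  and on all of its children, although some of them miss \<open>F\<close>, where \<open>A\<close> is \<open>0\<close>.\<close>

section \<open>Walsh functions and dyadic indices\<close>

lemma not_bit_nat_ge:
  fixes n :: nat
  assumes "n < 2 ^ K" "K \<le> t"
  shows "\<not> bit n t"
  by (metis assms bit_take_bit_iff not_le take_bit_nat_eq_self)

lemma bit_digit_nat: "(v::nat) < 2 \<Longrightarrow> bit v t \<longleftrightarrow> t = 0 \<and> v = 1"
  by (cases t) (auto simp: bit_Suc bit_0 elim: oddE)

lemma bit_add_exp_mult:
  fixes n v :: nat
  assumes "n < 2 ^ k" "v < 2"
  shows "bit (n + 2 ^ k * v) t \<longleftrightarrow> (if t < k then bit n t else t = k \<and> v = 1)"
proof -
  have high: "bit (2 ^ k * v) t \<longleftrightarrow> k \<le> t \<and> bit v (t - k)" for t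
    by (metis bit_push_bit_iff_nat push_bit_eq_mult mult.commute)
  have "bit (n + 2 ^ k * v) t \<longleftrightarrow> bit n t \<or> bit (2 ^ k * v) t"
    by (rule bit_disjunctive_add_iff) (use high not_bit_nat_ge[OF assms(1)] in auto)
  then show ?thesis
    using high not_bit_nat_ge[OF assms(1)] bit_digit_nat[OF assms(2)] by auto
qed

lemma bit_double_add_digit:
  fixes a v :: nat
  assumes "v < 2"
  shows "bit (2 * a + v) t \<longleftrightarrow> (if t = 0 then v = 1 else bit a (t - 1))"
  using assms by (cases t) (auto simp: bit_Suc bit_0 elim: oddE)

lemma add_exp_mult_less:
  fixes n v :: nat
  assumes "n < 2 ^ k" "v < 2"
  shows "n + 2 ^ k * v < 2 ^ Suc k"
proof -
  have "2 ^ k * v \<le> 2 ^ k * 1" using assms(2) by (intro mult_le_mono2) simp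
  then show ?thesis using assms(1) by (simp only: power_Suc)
qed

lemma walsh_eq_prod:
  assumes "n < 2 ^ K"
  shows "walsh n x = (\<Prod>t<K. if bit n t \<and> x t then -1 else 1)"
proof -
  have "{t. bit n t \<and> x t} = {..<K} \<inter> {t. bit n t \<and> x t}"
    using not_bit_nat_ge[OF assms] by (auto simp: not_less[symmetric])
  moreover have "(\<Prod>t<K. if bit n t \<and> x t then -1 else 1) =
      (\<Prod>t\<in>{..<K} \<inter> {t. bit n t \<and> x t}. (-1::real)) * (\<Prod>t\<in>{..<K} \<inter> - {t. bit n t \<and> x t}. 1)"
    by (rule prod.If_cases) simp
  ultimately show ?thesis by (simp add: walsh_def)
qed

lemma walsh_add_exp_mult:
  assumes "n < 2 ^ k" "v < 2"
  shows "walsh (n + 2 ^ k * v) x = walsh n x * (if v = 1 \<and> x k then -1 else 1)"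
proof -
  have "walsh (n + 2 ^ k * v) x = (\<Prod>t<Suc k. if bit (n + 2 ^ k * v) t \<and> x t then -1 else 1)"
    by (rule walsh_eq_prod[OF add_exp_mult_less[OF assms]])
  also have "\<dots> = (\<Prod>t<k. if bit (n + 2 ^ k * v) t \<and> x t then -1 else 1) *
      (if bit (n + 2 ^ k * v) k \<and> x k then -1 else 1)"
    by simp
  also have "(\<Prod>t<k. if bit (n + 2 ^ k * v) t \<and> x t then -1 else (1::real)) =
      (\<Prod>t<k. if bit n t \<and> x t then -1 else 1)"
    by (rule prod.cong) (simp_all add: bit_add_exp_mult[OF assms])
  also have "\<dots> = walsh n x"
    by (rule walsh_eq_prod[OF assms(1), symmetric])
  finally show ?thesis by (simp add: bit_add_exp_mult[OF assms] conj_commute)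
qed

lemma walshd_square: "walshd n g * walshd n g = 1"
proof -
  have "walsh m x * walsh m x = 1" for m x
    by (simp add: walsh_def flip: power_add)
  then show ?thesis by (simp add: walshd_def flip: prod.distrib)
qed

abbreviation child :: "('d \<Rightarrow> nat) \<Rightarrow> ('d \<Rightarrow> nat) \<Rightarrow> 'd \<Rightarrow> nat" where
  "child p \<sigma> \<equiv> \<lambda>l. 2 * p l + \<sigma> l"

abbreviation extend_top :: "nat \<Rightarrow> ('d \<Rightarrow> nat) \<Rightarrow> ('d \<Rightarrow> nat) \<Rightarrow> 'd \<Rightarrow> nat" where
  "extend_top k n v \<equiv> \<lambda>l. n l + 2 ^ k * v l"

lemma idx_eq_PiE: "idx k = Pi\<^sub>E UNIV (\<lambda>_. {..<2 ^ k})"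
  by (auto simp: idx_def PiE_UNIV_domain)

lemma finite_idx [simp]: "finite (idx k :: ('d::finite \<Rightarrow> nat) set)"
  by (simp add: idx_eq_PiE finite_PiE)

lemma card_idx: "card (idx k :: ('d::finite \<Rightarrow> nat) set) = 2 ^ (k * CARD('d))"
  by (simp add: idx_eq_PiE card_PiE power_mult)

lemma idx_0: "idx 0 = {\<lambda>_. 0}"
  by (auto simp: idx_def)

definition bin_vecs :: "('d \<Rightarrow> nat) set" where
  "bin_vecs = {\<sigma>. \<forall>l. \<sigma> l < 2}"

lemma finite_bin_vecs [simp]: "finite (bin_vecs :: ('d::finite \<Rightarrow> nat) set)"
  and card_bin_vecs: "card (bin_vecs :: ('d::finite \<Rightarrow> nat) set) = 2 ^ CARD('d)"
  using finite_idx[of 1] card_idx[of 1] by (simp_all add: bin_vecs_def idx_def)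

lemma zero_in_bin_vecs [simp]: "(\<lambda>_. 0) \<in> bin_vecs"
  by (simp add: bin_vecs_def)

lemma bin_vecs_ne_empty [simp]: "bin_vecs \<noteq> {}"
  using zero_in_bin_vecs by blast

lemma bin_vecs_cases: "\<sigma> \<in> bin_vecs \<Longrightarrow> \<sigma> l = 0 \<or> \<sigma> l = 1"
  by (auto simp: bin_vecs_def less_2_cases_iff)

lemma zero_in_idx [simp]: "(\<lambda>_. 0) \<in> idx k"
  by (simp add: idx_def)

lemma child_in_idx:
  assumes "p \<in> idx k" "\<sigma> \<in> bin_vecs"
  shows "child p \<sigma> \<in> idx (Suc k)"
proof -
  have "2 * p l + \<sigma> l < 2 ^ Suc k" for l
  proof -
    have "p l < 2 ^ k" "\<sigma> l < 2" using assms by (auto simp: idx_def bin_vecs_def)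
    then show ?thesis by simp
  qed
  then show ?thesis by (simp add: idx_def)
qed

lemma extend_top_in_idx:
  assumes "n \<in> idx k" "v \<in> bin_vecs"
  shows "extend_top k n v \<in> idx (Suc k)"
proof -
  have "n l + 2 ^ k * v l < 2 ^ Suc k" for l
    using assms by (intro add_exp_mult_less) (auto simp: idx_def bin_vecs_def)
  then show ?thesis by (simp add: idx_def)
qed

lemma idx_Suc_split_child:
  assumes "m \<in> idx (Suc k)"
  shows "(\<lambda>l. m l div 2) \<in> idx k" "(\<lambda>l. m l mod 2) \<in> bin_vecs"
    "m = child (\<lambda>l. m l div 2) (\<lambda>l. m l mod 2)"
proof -
  have "m l < 2 ^ k * 2" for l using assms by (simp add: idx_def mult.commute)
  then show "(\<lambda>l. m l div 2) \<in> idx k" by (simp add: idx_def less_mult_imp_div_less)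
qed (simp_all add: idx_def bin_vecs_def)

lemma idx_Suc_split_top:
  assumes "n \<in> idx (Suc k)"
  shows "(\<lambda>l. n l mod 2 ^ k) \<in> idx k" "(\<lambda>l. n l div 2 ^ k) \<in> bin_vecs"
    "n = extend_top k (\<lambda>l. n l mod 2 ^ k) (\<lambda>l. n l div 2 ^ k)"
proof -
  have "n l < 2 * 2 ^ k" for l using assms by (simp add: idx_def)
  then show "(\<lambda>l. n l div 2 ^ k) \<in> bin_vecs" by (simp add: bin_vecs_def less_mult_imp_div_less)
qed (simp_all add: idx_def bin_vecs_def)

lemma sum_idx_Suc_child:
  fixes f :: "('d::finite \<Rightarrow> nat) \<Rightarrow> 'a::comm_monoid_add"
  shows "(\<Sum>m\<in>idx (Suc k). f m) = (\<Sum>p\<in>idx k. \<Sum>\<sigma>\<in>bin_vecs. f (child p \<sigma>))"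
proof -
  have "(\<Sum>p\<in>idx k. \<Sum>\<sigma>\<in>bin_vecs. f (child p \<sigma>)) = (\<Sum>(p, \<sigma>)\<in>idx k \<times> bin_vecs. f (child p \<sigma>))"
    by (rule sum.cartesian_product)
  also have "\<dots> = (\<Sum>m\<in>idx (Suc k). f m)"
  proof (rule sum.reindex_bij_witness[where i = "\<lambda>m. (\<lambda>l. m l div 2, \<lambda>l. m l mod 2)"
        and j = "\<lambda>(p, \<sigma>). child p \<sigma>"])
    fix m :: "'d \<Rightarrow> nat" assume m: "m \<in> idx (Suc k)"
    show "(\<lambda>l. m l div 2, \<lambda>l. m l mod 2) \<in> idx k \<times> bin_vecs"
      using idx_Suc_split_child(1,2)[OF m] by (rule SigmaI)
  next
    fix a :: "('d \<Rightarrow> nat) \<times> ('d \<Rightarrow> nat)" assume "a \<in> idx k \<times> bin_vecs"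
    then show "(\<lambda>(p, \<sigma>). child p \<sigma>) a \<in> idx (Suc k)"
      by (auto intro: child_in_idx)
  qed (auto simp: idx_def bin_vecs_def fun_eq_iff)
  finally show ?thesis by simp
qed

lemma sum_idx_Suc_top:
  fixes f :: "('d::finite \<Rightarrow> nat) \<Rightarrow> 'a::comm_monoid_add"
  shows "(\<Sum>n\<in>idx (Suc k). f n) = (\<Sum>n\<in>idx k. \<Sum>v\<in>bin_vecs. f (extend_top k n v))"
proof -
  have "(\<Sum>n\<in>idx k. \<Sum>v\<in>bin_vecs. f (extend_top k n v)) = (\<Sum>(n, v)\<in>idx k \<times> bin_vecs. f (extend_top k n v))"
    by (rule sum.cartesian_product)
  also have "\<dots> = (\<Sum>m\<in>idx (Suc k). f m)"
  proof (rule sum.reindex_bij_witness[where i = "\<lambda>m. (\<lambda>l. m l mod 2 ^ k, \<lambda>l. m l div 2 ^ k)"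
        and j = "\<lambda>(n, v). extend_top k n v"])
    fix m :: "'d \<Rightarrow> nat" assume m: "m \<in> idx (Suc k)"
    show "(\<lambda>l. m l mod 2 ^ k, \<lambda>l. m l div 2 ^ k) \<in> idx k \<times> bin_vecs"
      using idx_Suc_split_top(1,2)[OF m] by (rule SigmaI)
  next
    fix a :: "('d \<Rightarrow> nat) \<times> ('d \<Rightarrow> nat)" assume "a \<in> idx k \<times> bin_vecs"
    then show "(\<lambda>(n, v). extend_top k n v) a \<in> idx (Suc k)"
      by (auto intro: extend_top_in_idx)
  qed (auto simp: idx_def bin_vecs_def fun_eq_iff)
  finally show ?thesis by simp
qed

section \<open>Characters of \<open>{0,1}\<^sup>d\<close>\<close>

definition digit :: "nat \<Rightarrow> ('d \<Rightarrow> dyad) \<Rightarrow> 'd \<Rightarrow> nat" where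
  "digit k g = (\<lambda>l. if g l k then 1 else 0)"

lemma digit_in_bin_vecs: "digit k g \<in> bin_vecs"
  by (simp add: digit_def bin_vecs_def)

definition chi :: "('d::finite \<Rightarrow> nat) \<Rightarrow> ('d \<Rightarrow> nat) \<Rightarrow> real" where
  "chi v \<sigma> = (\<Prod>l\<in>UNIV. if v l = 1 \<and> \<sigma> l = 1 then -1 else 1)"

definition flip :: "'d \<Rightarrow> ('d \<Rightarrow> nat) \<Rightarrow> 'd \<Rightarrow> nat" where
  "flip l \<sigma> = \<sigma>(l := 1 - \<sigma> l)"

lemma chi_zero_left [simp]: "chi (\<lambda>_. 0) \<sigma> = 1"
  and chi_zero_right [simp]: "chi v (\<lambda>_. 0) = 1"
  by (simp_all add: chi_def)

lemma chi_cases: "chi v \<sigma> = 1 \<or> chi v \<sigma> = -1"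
proof -
  have "chi v \<sigma> * chi v \<sigma> = 1"
    unfolding chi_def prod.distrib[symmetric] by (rule prod.neutral) simp
  then show ?thesis by (simp add: square_eq_1_iff)
qed

lemma chi_mult:
  assumes "v \<in> bin_vecs" "w \<in> bin_vecs"
  shows "chi v \<sigma> * chi w \<sigma> = chi (\<lambda>l. (v l + w l) mod 2) \<sigma>"
proof -
  have "(if v l = 1 \<and> \<sigma> l = 1 then -1 else 1) * (if w l = 1 \<and> \<sigma> l = 1 then -1 else 1) =
      (if (v l + w l) mod 2 = 1 \<and> \<sigma> l = 1 then -1 else (1::real))" for l
    using bin_vecs_cases[OF assms(1), of l] bin_vecs_cases[OF assms(2), of l] by auto
  then show ?thesis by (simp add: chi_def flip: prod.distrib)
qed

lemma flip_in_bin_vecs: "\<sigma> \<in> bin_vecs \<Longrightarrow> flip l \<sigma> \<in> bin_vecs"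
  by (simp add: flip_def bin_vecs_def)

lemma flip_flip: "\<sigma> \<in> bin_vecs \<Longrightarrow> flip l (flip l \<sigma>) = \<sigma>"
  using bin_vecs_cases[of \<sigma> l] by (auto simp: flip_def)

lemma flip_neq: "\<sigma> \<in> bin_vecs \<Longrightarrow> flip l \<sigma> \<noteq> \<sigma>"
  using bin_vecs_cases[of \<sigma> l] by (auto simp: flip_def fun_eq_iff)

lemma flip_commute: "flip l (flip l' \<sigma>) = flip l' (flip l \<sigma>)"
  by (auto simp: flip_def fun_eq_iff)

lemma chi_flip:
  assumes "\<sigma> \<in> bin_vecs"
  shows "chi v (flip l \<sigma>) = (if v l = 1 then - chi v \<sigma> else chi v \<sigma>)"
proof -
  have "\<sigma> l = 0 \<or> \<sigma> l = 1" by (rule bin_vecs_cases[OF assms])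
  moreover have "chi w \<tau> = (if w l = 1 \<and> \<tau> l = 1 then -1 else 1) *
      (\<Prod>l'\<in>UNIV - {l}. if w l' = 1 \<and> \<tau> l' = 1 then -1 else 1)" for w \<tau>
    unfolding chi_def by (rule prod.remove) simp_all
  moreover have "(\<Prod>l'\<in>UNIV - {l}. if v l' = 1 \<and> flip l \<sigma> l' = 1 then -1 else (1::real)) =
      (\<Prod>l'\<in>UNIV - {l}. if v l' = 1 \<and> \<sigma> l' = 1 then -1 else 1)"
    by (rule prod.cong) (auto simp: flip_def)
  ultimately show ?thesis by (auto simp: flip_def)
qed

lemma chi_sum_eq_0:
  assumes "v \<in> bin_vecs" "v \<noteq> (\<lambda>_. 0)"
  shows "(\<Sum>\<sigma>\<in>bin_vecs. chi v \<sigma>) = 0"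
proof -
  obtain l where "v l \<noteq> 0" using assms(2) by auto
  with bin_vecs_cases[OF assms(1)] have "v l = 1" by metis
  then show ?thesis
    by (intro sum_involution_eq_0[where h = "flip l"])
      (auto simp: chi_flip flip_in_bin_vecs flip_flip flip_neq)
qed

lemma chi_sum:
  fixes v :: "'d::finite \<Rightarrow> nat"
  assumes "v \<in> bin_vecs"
  shows "(\<Sum>\<sigma>\<in>bin_vecs. chi v \<sigma>) = (if v = (\<lambda>_. 0) then 2 ^ CARD('d) else 0)"
  using chi_sum_eq_0[OF assms] by (simp add: card_bin_vecs)

lemma chi_orthogonal:
  fixes v w :: "'d::finite \<Rightarrow> nat"
  assumes "v \<in> bin_vecs" "w \<in> bin_vecs"
  shows "(\<Sum>\<sigma>\<in>bin_vecs. chi v \<sigma> * chi w \<sigma>) = (if v = w then 2 ^ CARD('d) else 0)"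
proof -
  have "(v l + w l) mod 2 = 0 \<longleftrightarrow> v l = w l" for l
    using bin_vecs_cases[OF assms(1), of l] bin_vecs_cases[OF assms(2), of l] by auto
  then have "(\<lambda>l. (v l + w l) mod 2) = (\<lambda>_. 0) \<longleftrightarrow> v = w"
    by (auto simp: fun_eq_iff)
  moreover have "(\<lambda>l. (v l + w l) mod 2) \<in> bin_vecs" by (simp add: bin_vecs_def)
  ultimately show ?thesis by (simp add: chi_mult assms chi_sum)
qed

text \<open>Flipping two coordinates on which \<open>v\<close> differs preserves the parity of \<open>\<sigma>\<close> and
  changes the sign of \<open>chi v \<sigma>\<close>.\<close>
lemma chi_sum_parity_class_eq_0:
  assumes "v \<in> bin_vecs" "v \<noteq> (\<lambda>_. 0)" "v \<noteq> (\<lambda>_. 1)"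
  shows "(\<Sum>\<sigma>\<in>{\<sigma>\<in>bin_vecs. chi (\<lambda>_. 1) \<sigma> = \<beta>}. chi v \<sigma>) = 0"
proof -
  obtain l1 where "v l1 \<noteq> 0" using assms(2) by auto
  obtain l2 where "v l2 \<noteq> 1" using assms(3) by auto
  have "v l1 = 1" "v l2 = 0"
    using bin_vecs_cases[OF assms(1), of l1] bin_vecs_cases[OF assms(1), of l2]
      \<open>v l1 \<noteq> 0\<close> \<open>v l2 \<noteq> 1\<close> by auto
  then have "l1 \<noteq> l2" by auto
  let ?h = "\<lambda>\<sigma>. flip l1 (flip l2 \<sigma>)"
  have "?h (?h \<sigma>) = \<sigma>" if "\<sigma> \<in> bin_vecs" for \<sigma>
    using that by (metis flip_commute flip_flip flip_in_bin_vecs)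
  moreover have "?h \<sigma> \<noteq> \<sigma>" if "\<sigma> \<in> bin_vecs" for \<sigma>
  proof -
    have "?h \<sigma> l1 = 1 - \<sigma> l1" using \<open>l1 \<noteq> l2\<close> by (simp add: flip_def)
    then show ?thesis using bin_vecs_cases[OF that, of l1] by auto
  qed
  ultimately show ?thesis
    using \<open>v l1 = 1\<close> \<open>v l2 = 0\<close>
    by (intro sum_involution_eq_0[where h = ?h]) (auto simp: chi_flip flip_in_bin_vecs)
qed

section \<open>Dyadic cubes\<close>

lemma mem_dcube_iff: "g \<in> dcube k m \<longleftrightarrow> (\<forall>l t. t < k \<longrightarrow> g l t = bit (m l) (k - 1 - t))"
  by (auto simp: dcube_def dint_def)

lemma cube_pt_in_dcube: "cube_pt k m \<in> dcube k m"
  by (simp add: mem_dcube_iff cube_pt_def)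

lemma dcube_prefix_eq: "g \<in> dcube k m \<Longrightarrow> h \<in> dcube k m \<Longrightarrow> t < k \<Longrightarrow> g l t = h l t"
  by (simp add: mem_dcube_iff)

lemma dcube_prefix_cong: "g \<in> dcube k m \<Longrightarrow> (\<And>l t. t < k \<Longrightarrow> g l t = h l t) \<Longrightarrow> h \<in> dcube k m"
  by (simp add: mem_dcube_iff)

lemma mem_dcube_child_iff:
  assumes "\<sigma> \<in> bin_vecs"
  shows "g \<in> dcube (Suc k) (child p \<sigma>) \<longleftrightarrow> g \<in> dcube k p \<and> digit k g = \<sigma>"
proof -
  have "bit (2 * p l + \<sigma> l) (Suc k - 1 - t) = (if t = k then \<sigma> l = 1 else bit (p l) (k - 1 - t))"
    if "t < Suc k" for l t
  proof -
    have "\<sigma> l < 2" using assms by (simp add: bin_vecs_def)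
    moreover have "t \<noteq> k \<Longrightarrow> k - t - 1 = k - 1 - t" by simp
    ultimately show ?thesis using that by (simp add: bit_double_add_digit)
  qed
  moreover have "digit k g = \<sigma> \<longleftrightarrow> (\<forall>l. g l k = (\<sigma> l = 1))"
  proof -
    have "digit k g l = \<sigma> l \<longleftrightarrow> g l k = (\<sigma> l = 1)" for l
      using bin_vecs_cases[OF assms, of l] by (auto simp: digit_def)
    then show ?thesis by (auto simp: fun_eq_iff)
  qed
  ultimately show ?thesis by (auto simp: mem_dcube_iff less_Suc_eq)
qed

lemma dcube_unique:
  assumes "p \<in> idx k" "p' \<in> idx k" "g \<in> dcube k p" "g \<in> dcube k p'"
  shows "p = p'"
proof
  fix l
  show "p l = p' l"
  proof (rule bit_eqI)
    fix t
    show "bit (p l) t = bit (p' l) t"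
    proof (cases "t < k")
      case True
      then have "k - 1 - (k - 1 - t) = t" "k - 1 - t < k" by simp_all
      then show ?thesis using assms(3,4) by (metis mem_dcube_iff)
    next
      case False
      then show ?thesis using assms(1,2) not_bit_nat_ge[of _ k t] by (simp add: idx_def)
    qed
  qed
qed

lemma ex_dcube: "\<exists>p\<in>idx k. g \<in> dcube k p"
proof (induction k)
  case 0
  have "g \<in> dcube 0 (\<lambda>_. 0)" by (simp add: mem_dcube_iff)
  then show ?case using zero_in_idx by blast
next
  case (Suc k)
  then obtain p where "p \<in> idx k" "g \<in> dcube k p" by blast
  then have "child p (digit k g) \<in> idx (Suc k)" "g \<in> dcube (Suc k) (child p (digit k g))"
    by (simp_all add: child_in_idx digit_in_bin_vecs mem_dcube_child_iff)
  then show ?case by blast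
qed

lemma walshd_prefix_cong:
  assumes "n \<in> idx K" "\<And>l t. t < K \<Longrightarrow> g l t = h l t"
  shows "walshd n g = walshd n h"
  using assms by (simp add: walshd_def walsh_eq_prod[of _ K] idx_def)

lemma walshd_extend_top:
  assumes "n \<in> idx k" "v \<in> bin_vecs"
  shows "walshd (extend_top k n v) g = walshd n g * chi v (digit k g)"
proof -
  have "walsh (n l + 2 ^ k * v l) (g l) =
      walsh (n l) (g l) * (if v l = 1 \<and> digit k g l = 1 then -1 else 1)" for l
    using assms walsh_add_exp_mult[of "n l" k "v l" "g l"] by (simp add: idx_def bin_vecs_def digit_def)
  then show ?thesis by (simp add: walshd_def chi_def prod.distrib)
qed

lemma Wk_extend_top_child:
  assumes "n \<in> idx k" "v \<in> bin_vecs" "\<sigma> \<in> bin_vecs"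
  shows "Wk (Suc k) (extend_top k n v) (child p \<sigma>) = Wk k n p * chi v \<sigma>"
proof -
  let ?g = "cube_pt (Suc k) (child p \<sigma>)"
  have g: "?g \<in> dcube k p" "digit k ?g = \<sigma>"
    using cube_pt_in_dcube[of "Suc k" "child p \<sigma>"] mem_dcube_child_iff[OF assms(3)] by blast+
  have "walshd n ?g = walshd n (cube_pt k p)"
    using dcube_prefix_eq[OF g(1) cube_pt_in_dcube] by (rule walshd_prefix_cong[OF assms(1)])
  then show ?thesis by (simp add: Wk_def walshd_extend_top[OF assms(1,2)] g(2))
qed

lemma extend_top_eq_iff:
  assumes "n \<in> idx k" "n' \<in> idx k" "v \<in> bin_vecs" "v' \<in> bin_vecs"
  shows "extend_top k n v = extend_top k n' v' \<longleftrightarrow> n = n' \<and> v = v'"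
proof
  assume eq: "extend_top k n v = extend_top k n' v'"
  have "(n l + 2 ^ k * v l) mod 2 ^ k = n l" "(n l + 2 ^ k * v l) div 2 ^ k = v l"
    "(n' l + 2 ^ k * v' l) mod 2 ^ k = n' l" "(n' l + 2 ^ k * v' l) div 2 ^ k = v' l" for l
    using assms by (auto simp: idx_def bin_vecs_def)
  then show "n = n' \<and> v = v'" using eq by (metis ext)
qed simp

lemma Wk_orthogonal:
  fixes n n' :: "'d::finite \<Rightarrow> nat"
  assumes "n \<in> idx k" "n' \<in> idx k"
  shows "(\<Sum>m\<in>idx k. Wk k n m * Wk k n' m) = (if n = n' then 2 ^ (k * CARD('d)) else 0)"
  using assms
proof (induction k arbitrary: n n')
  case 0
  then show ?case by (simp add: idx_0 Wk_def walshd_def walsh_def)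
next
  case (Suc k)
  obtain a v where a: "a \<in> idx k" "v \<in> bin_vecs" "n = extend_top k a v"
    using idx_Suc_split_top[OF Suc.prems(1)] by blast
  obtain a' v' where a': "a' \<in> idx k" "v' \<in> bin_vecs" "n' = extend_top k a' v'"
    using idx_Suc_split_top[OF Suc.prems(2)] by blast
  have "(\<Sum>m\<in>idx (Suc k). Wk (Suc k) n m * Wk (Suc k) n' m) =
      (\<Sum>p\<in>idx k. \<Sum>\<sigma>\<in>bin_vecs. (Wk k a p * Wk k a' p) * (chi v \<sigma> * chi v' \<sigma>))"
    unfolding sum_idx_Suc_child a(3) a'(3)
    by (intro sum.cong refl) (simp add: Wk_extend_top_child a(1,2) a'(1,2))
  also have "\<dots> = (\<Sum>p\<in>idx k. Wk k a p * Wk k a' p) * (\<Sum>\<sigma>\<in>bin_vecs. chi v \<sigma> * chi v' \<sigma>)"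
    by (simp add: sum_product)
  also have "\<dots> = (if n = n' then 2 ^ (Suc k * CARD('d)) else 0)"
    using Suc.IH[OF a(1) a'(1)] chi_orthogonal[OF a(2) a'(2)]
    by (simp add: a(3) a'(3) extend_top_eq_iff a a' power_add)
  finally show ?case .
qed

section \<open>Dyadic partial sums\<close>

definition dyadic_psum :: "(('d::finite \<Rightarrow> nat) \<Rightarrow> real) \<Rightarrow> nat \<Rightarrow> ('d \<Rightarrow> dyad) \<Rightarrow> real" where
  "dyadic_psum a k g = (\<Sum>n\<in>idx k. a n * walshd n g)"

definition top_block ::
    "(('d::finite \<Rightarrow> nat) \<Rightarrow> real) \<Rightarrow> nat \<Rightarrow> ('d \<Rightarrow> nat) \<Rightarrow> ('d \<Rightarrow> dyad) \<Rightarrow> real" where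
  "top_block a k v g = (\<Sum>n\<in>idx k. a (extend_top k n v) * walshd n g)"

lemma psum_exp_eq_dyadic_psum: "psum a (\<lambda>_. 2 ^ k) g = dyadic_psum a k g"
  by (simp add: psum_def dyadic_psum_def idx_def)

lemma dyadic_psum_0: "dyadic_psum a 0 g = a (\<lambda>_. 0)"
  by (simp add: dyadic_psum_def idx_0 walshd_def walsh_def)

lemma top_block_zero: "top_block a k (\<lambda>_. 0) g = dyadic_psum a k g"
  by (simp add: top_block_def dyadic_psum_def)

lemma dyadic_psum_prefix_cong:
  "(\<And>l t. t < k \<Longrightarrow> g l t = h l t) \<Longrightarrow> dyadic_psum a k g = dyadic_psum a k h"
  unfolding dyadic_psum_def by (intro sum.cong refl) (metis walshd_prefix_cong)

lemma top_block_prefix_cong: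
  "(\<And>l t. t < k \<Longrightarrow> g l t = h l t) \<Longrightarrow> top_block a k v g = top_block a k v h"
  unfolding top_block_def by (intro sum.cong refl) (metis walshd_prefix_cong)

lemma dyadic_psum_dcube: "g \<in> dcube k p \<Longrightarrow> dyadic_psum a k g = dyadic_psum a k (cube_pt k p)"
  by (rule dyadic_psum_prefix_cong) (rule dcube_prefix_eq[OF _ cube_pt_in_dcube])

lemma dyadic_psum_Suc:
  "dyadic_psum a (Suc k) g = (\<Sum>v\<in>bin_vecs. chi v (digit k g) * top_block a k v g)"
proof -
  have "dyadic_psum a (Suc k) g =
      (\<Sum>n\<in>idx k. \<Sum>v\<in>bin_vecs. chi v (digit k g) * (a (extend_top k n v) * walshd n g))"
    unfolding dyadic_psum_def sum_idx_Suc_top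
    by (intro sum.cong refl) (simp add: walshd_extend_top)
  also have "\<dots> = (\<Sum>v\<in>bin_vecs. chi v (digit k g) * top_block a k v g)"
    by (subst sum.swap) (simp add: top_block_def sum_distrib_left)
  finally show ?thesis .
qed

lemma dyadic_psum_child:
  assumes "\<sigma> \<in> bin_vecs"
  shows "dyadic_psum a (Suc k) (cube_pt (Suc k) (child p \<sigma>)) =
    (\<Sum>v\<in>bin_vecs. chi v \<sigma> * top_block a k v (cube_pt k p))"
proof -
  let ?g = "cube_pt (Suc k) (child p \<sigma>)"
  have g: "?g \<in> dcube k p" "digit k ?g = \<sigma>"
    using cube_pt_in_dcube[of "Suc k" "child p \<sigma>"] mem_dcube_child_iff[OF assms] by blast+
  have "top_block a k v ?g = top_block a k v (cube_pt k p)" for v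
    using dcube_prefix_eq[OF g(1) cube_pt_in_dcube] by (rule top_block_prefix_cong)
  then show ?thesis by (simp add: dyadic_psum_Suc g(2))
qed

lemma dyadic_psum_children_sum:
  "(\<Sum>\<sigma>\<in>bin_vecs. dyadic_psum a (Suc k) (cube_pt (Suc k) (child p \<sigma>))) =
    2 ^ CARD('d) * dyadic_psum a k (cube_pt k (p :: 'd::finite \<Rightarrow> nat))"
proof -
  have "(\<Sum>\<sigma>\<in>bin_vecs. dyadic_psum a (Suc k) (cube_pt (Suc k) (child p \<sigma>))) =
      (\<Sum>\<sigma>\<in>bin_vecs. \<Sum>v\<in>bin_vecs. chi v \<sigma> * top_block a k v (cube_pt k p))"
    by (intro sum.cong refl) (simp add: dyadic_psum_child)
  also have "\<dots> = (\<Sum>v\<in>bin_vecs. (\<Sum>\<sigma>\<in>bin_vecs. chi v \<sigma>) * top_block a k v (cube_pt k p))"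
    by (subst sum.swap) (simp add: sum_distrib_right)
  also have "\<dots> = (\<Sum>v\<in>bin_vecs.
      if v = (\<lambda>_. 0) then 2 ^ CARD('d) * top_block a k v (cube_pt k p) else 0)"
    by (intro sum.cong refl) (simp add: chi_sum)
  also have "\<dots> = 2 ^ CARD('d) * top_block a k (\<lambda>_. 0) (cube_pt k p)"
    by (simp add: sum.delta)
  finally show ?thesis by (simp add: top_block_zero)
qed

lemma ex_child_abs_dyadic_psum_ge:
  "\<exists>\<sigma>\<in>bin_vecs. \<bar>dyadic_psum a k (cube_pt k (p :: 'd::finite \<Rightarrow> nat))\<bar> \<le>
     \<bar>dyadic_psum a (Suc k) (cube_pt (Suc k) (child p \<sigma>))\<bar>"
proof (rule ccontr)
  let ?A = "\<lambda>\<sigma>. dyadic_psum a (Suc k) (cube_pt (Suc k) (child p \<sigma>))"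
  assume "\<not> ?thesis"
  then have "\<bar>?A \<sigma>\<bar> < \<bar>dyadic_psum a k (cube_pt k p)\<bar>" if "\<sigma> \<in> bin_vecs" for \<sigma>
    using that by (simp add: not_le)
  then have "(\<Sum>\<sigma>\<in>bin_vecs. \<bar>?A \<sigma>\<bar>) < (\<Sum>\<sigma>\<in>(bin_vecs :: ('d \<Rightarrow> nat) set). \<bar>dyadic_psum a k (cube_pt k p)\<bar>)"
    by (intro sum_strict_mono) simp_all
  also have "\<dots> = \<bar>\<Sum>\<sigma>\<in>bin_vecs. ?A \<sigma>\<bar>"
    by (simp add: dyadic_psum_children_sum card_bin_vecs abs_mult)
  also have "\<dots> \<le> (\<Sum>\<sigma>\<in>bin_vecs. \<bar>?A \<sigma>\<bar>)"
    by (rule sum_abs)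
  finally show False by simp
qed

lemma nested_dcubes_common_point:
  assumes "\<And>i. dcube (k + Suc i) (c (Suc i)) \<subseteq> dcube (k + i) (c i)"
  shows "\<exists>g. \<forall>i. g \<in> dcube (k + i) (c i)"
proof -
  have dec: "decseq (\<lambda>i. dcube (k + i) (c i))"
    using assms by (simp add: decseq_Suc_iff)
  define g where "g l t = cube_pt (k + Suc t) (c (Suc t)) l t" for l t
  have "g \<in> dcube (k + i) (c i)" for i
  proof (rule dcube_prefix_cong[OF cube_pt_in_dcube])
    fix l t assume t: "t < k + i"
    define j where "j = max i (Suc t)"
    have in_i: "cube_pt (k + j) (c j) \<in> dcube (k + i) (c i)"
      and in_t: "cube_pt (k + j) (c j) \<in> dcube (k + Suc t) (c (Suc t))"
      using decseqD[OF dec, of i j] decseqD[OF dec, of "Suc t" j] cube_pt_in_dcube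
      by (auto simp: j_def)
    have "cube_pt (k + i) (c i) l t = cube_pt (k + j) (c j) l t"
      by (rule dcube_prefix_eq[OF cube_pt_in_dcube in_i t])
    also have "\<dots> = g l t"
      unfolding g_def by (rule dcube_prefix_eq[OF in_t cube_pt_in_dcube]) simp
    finally show "cube_pt (k + i) (c i) l t = g l t" .
  qed
  then show ?thesis by blast
qed

text \<open>If the partial sum is nonzero on a cube, \<open>dyadic_psum_children_sum\<close> yields a nested
  chain of subcubes along which its absolute value does not decrease; their common point
  lies outside \<open>F\<close>, where the partial sums tend to \<open>0\<close>.\<close>
lemma dyadic_psum_eq_0_off:
  fixes F :: "('d::finite \<Rightarrow> dyad) set"
  assumes lim: "\<And>g. g \<notin> F \<Longrightarrow> (\<lambda>k. dyadic_psum a k g) \<longlonglongrightarrow> 0"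
    and "dcube k p \<inter> F = {}"
  shows "dyadic_psum a k (cube_pt k p) = 0"
proof (rule ccontr)
  define A where "A j q = \<bar>dyadic_psum a j (cube_pt j q)\<bar>" for j q
  assume "dyadic_psum a k (cube_pt k p) \<noteq> 0"
  then have pos: "0 < A k p" by (simp add: A_def)
  define P where "P i q \<longleftrightarrow> A k p \<le> A (k + i) q \<and> (i = 0 \<longrightarrow> q = p)" for i q
  have step: "\<exists>q'. P (Suc i) q' \<and> (\<exists>\<sigma>\<in>bin_vecs. q' = child q \<sigma>)" if "P i q" for i q
  proof -
    obtain \<sigma> where \<sigma>: "\<sigma> \<in> bin_vecs" "A (k + i) q \<le> A (k + Suc i) (child q \<sigma>)"
      using ex_child_abs_dyadic_psum_ge[of a "k + i" q] unfolding A_def add_Suc_right by blast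
    have "P (Suc i) (child q \<sigma>)"
      using that \<sigma>(2) order_trans[of "A k p" "A (k + i) q" "A (k + Suc i) (child q \<sigma>)"]
      by (simp add: P_def)
    with \<sigma>(1) show ?thesis by blast
  qed
  have "P 0 p" by (simp add: P_def)
  have "\<exists>c. \<forall>i. P i (c i) \<and> (\<exists>\<sigma>\<in>bin_vecs. c (Suc i) = child (c i) \<sigma>)"
    by (rule dependent_nat_choice) (use \<open>P 0 p\<close> step in blast)+
  then obtain c where c: "\<And>i. P i (c i)" and c_child: "\<And>i. \<exists>\<sigma>\<in>bin_vecs. c (Suc i) = child (c i) \<sigma>"
    by blast
  have "dcube (k + Suc i) (c (Suc i)) \<subseteq> dcube (k + i) (c i)" for i
  proof -
    obtain \<sigma> where "\<sigma> \<in> bin_vecs" "c (Suc i) = child (c i) \<sigma>" using c_child by blast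
    then show ?thesis by (auto simp: mem_dcube_child_iff)
  qed
  then obtain g where g: "\<And>i. g \<in> dcube (k + i) (c i)"
    using nested_dcubes_common_point[of k c] by blast
  then have "g \<notin> F" using g[of 0] c[of 0] assms(2) by (auto simp: P_def)
  then obtain N where "\<And>j. j \<ge> N \<Longrightarrow> \<bar>dyadic_psum a j g\<bar> < A k p"
    using LIMSEQ_D[OF lim pos] by auto
  moreover have "A k p \<le> \<bar>dyadic_psum a (k + N) g\<bar>"
    using c[of N] dyadic_psum_dcube[OF g[of N]] by (simp add: A_def P_def)
  ultimately show False by (meson le_add2 not_le)
qed

lemma dyadic_psum_tendsto_0:
  assumes "conv_rect a g 0 \<or> conv_cube a g 0"
  shows "(\<lambda>k. dyadic_psum a k g) \<longlonglongrightarrow> 0"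
  using assms
proof
  assume "conv_rect a g 0"
  show ?thesis
  proof (rule LIMSEQ_I)
    fix r :: real assume "0 < r"
    then have "\<exists>M. \<forall>N. (\<forall>l. M \<le> N l) \<longrightarrow> \<bar>psum a N g\<bar> < r"
      using \<open>conv_rect a g 0\<close> by (simp add: conv_rect_def)
    then obtain M where M: "\<And>N. (\<forall>l. M \<le> N l) \<Longrightarrow> \<bar>psum a N g\<bar> < r"
      by blast
    have "norm (dyadic_psum a k g - 0) < r" if "M \<le> k" for k
    proof -
      have "M \<le> 2 ^ k" using that less_exp[of k] by linarith
      then show ?thesis using M[of "\<lambda>_. 2 ^ k"] by (simp add: psum_exp_eq_dyadic_psum)
    qed
    then show "\<exists>M. \<forall>k\<ge>M. norm (dyadic_psum a k g - 0) < r" by blast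
  qed
next
  assume "conv_cube a g 0"
  then have "((\<lambda>N. psum a (\<lambda>_. N) g) \<circ> (\<lambda>k. 2 ^ k)) \<longlonglongrightarrow> 0"
    unfolding conv_cube_def by (rule LIMSEQ_subseq_LIMSEQ) (simp add: strict_mono_def)
  then show ?thesis by (simp add: o_def psum_exp_eq_dyadic_psum)
qed

lemma coeff_eq_from_dyadic_psum:
  fixes a :: "('d::finite \<Rightarrow> nat) \<Rightarrow> real"
  assumes "n \<in> idx k"
  shows "2 ^ (k * CARD('d)) * a n = (\<Sum>m\<in>idx k. Wk k n m * dyadic_psum a k (cube_pt k m))"
proof -
  have "(\<Sum>m\<in>idx k. Wk k n m * dyadic_psum a k (cube_pt k m)) =
      (\<Sum>m\<in>idx k. \<Sum>n'\<in>idx k. a n' * (Wk k n m * Wk k n' m))"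
    by (simp add: dyadic_psum_def Wk_def sum_distrib_left mult_ac)
  also have "\<dots> = (\<Sum>n'\<in>idx k. a n' * (\<Sum>m\<in>idx k. Wk k n m * Wk k n' m))"
    by (subst sum.swap) (simp add: sum_distrib_left)
  also have "\<dots> = (\<Sum>n'\<in>idx k. if n' = n then 2 ^ (k * CARD('d)) * a n else 0)"
    by (intro sum.cong refl) (auto simp: Wk_orthogonal assms)
  finally show ?thesis using assms by simp
qed

section \<open>The set \<open>F\<close>\<close>

lemma strict_mono_ms: "strict_mono ms"
  by (rule strict_mono_Suc_iff[THEN iffD2]) simp

lemma le_ms: "s \<le> ms s"
  by (induction s) auto

lemma walsh_exp: "walsh (2 ^ K) x = (if x K then -1 else 1)"
proof -
  have "{t. bit ((2::nat) ^ K) t \<and> x t} = (if x K then {K} else {})"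
    by (auto simp: bit_exp_iff)
  then show ?thesis by (simp add: walsh_def)
qed

lemma Rk_eq_chi: "Rk K g = chi (\<lambda>_. 1) (digit K g)"
  unfolding Rk_def walshd_def chi_def digit_def by (rule prod.cong) (auto simp: walsh_exp)

text \<open>For \<open>p = 2\<^sup>q m + m'\<close>, the value \<open>W\<^sup>(\<^sup>q\<^sup>)\<^sub>m\<^sub>m\<^sub>'\<close> that \<open>F\<^sub>q\<close>
  prescribes for \<open>R\<^sub>2\<^sub>q\<^sub>1\<close> on the cube \<open>\<Delta>\<^sup>(\<^sup>2\<^sup>q\<^sup>)\<^sub>p\<close>.\<close>
definition F_sign :: "nat \<Rightarrow> ('d::finite \<Rightarrow> nat) \<Rightarrow> real" where
  "F_sign q p = Wk q (\<lambda>l. p l div 2 ^ q) (\<lambda>l. p l mod 2 ^ q)"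

lemma F_sign_cases: "F_sign q p = 1 \<or> F_sign q p = -1"
  using walshd_square by (simp add: F_sign_def Wk_def square_eq_1_iff)

lemma idx_double_split:
  assumes "p \<in> idx (2 * q)"
  shows "(\<lambda>l. p l div 2 ^ q) \<in> idx q" "(\<lambda>l. p l mod 2 ^ q) \<in> idx q"
    "p = (\<lambda>l. 2 ^ q * (p l div 2 ^ q) + p l mod 2 ^ q)"
proof -
  have "p l < 2 ^ q * 2 ^ q" for l using assms by (simp add: idx_def mult_2 power_add)
  then show "(\<lambda>l. p l div 2 ^ q) \<in> idx q" by (simp add: idx_def less_mult_imp_div_less)
qed (simp_all add: idx_def)

lemma idx_double_join:
  assumes "m \<in> idx q" "m' \<in> idx q"
  shows "(\<lambda>l. 2 ^ q * m l + m' l) \<in> idx (2 * q)"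
proof -
  have "2 ^ q * m l + m' l < 2 ^ (2 * q)" for l
  proof -
    have "m l < 2 ^ q" "m' l < 2 ^ q" using assms by (auto simp: idx_def)
    then have "2 ^ q * (m l + 1) \<le> 2 ^ q * 2 ^ q" by (intro mult_le_mono2) simp
    with \<open>m' l < 2 ^ q\<close> show ?thesis by (simp add: mult_2 power_add)
  qed
  then show ?thesis by (simp add: idx_def)
qed

lemma mem_Fs_iff:
  assumes "p \<in> idx (2 * q)" "g \<in> dcube (2 * q) p"
  shows "g \<in> Fs q \<longleftrightarrow> chi (\<lambda>_. 1) (digit (2 * q) g) = F_sign q p"
proof
  assume "g \<in> Fs q"
  then obtain m m' where mm: "m \<in> idx q" "m' \<in> idx q"
    "g \<in> dcube (2 * q) (\<lambda>l. 2 ^ q * m l + m' l)" "Rk (2 * q) g = Wk q m m'"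
    unfolding Fs_def by blast
  have "(\<lambda>l. 2 ^ q * m l + m' l) = p"
    by (rule dcube_unique[OF idx_double_join[OF mm(1,2)] assms(1) mm(3) assms(2)])
  moreover have "m' l < 2 ^ q" for l using mm(2) by (simp add: idx_def)
  ultimately have "(\<lambda>l. p l div 2 ^ q) = m" "(\<lambda>l. p l mod 2 ^ q) = m'"
    by auto
  then show "chi (\<lambda>_. 1) (digit (2 * q) g) = F_sign q p"
    using mm(4) by (simp add: F_sign_def Rk_eq_chi)
next
  assume "chi (\<lambda>_. 1) (digit (2 * q) g) = F_sign q p"
  then have "Rk (2 * q) g = Wk q (\<lambda>l. p l div 2 ^ q) (\<lambda>l. p l mod 2 ^ q)"
    by (simp add: Rk_eq_chi F_sign_def)
  moreover have "g \<in> dcube (2 * q) (\<lambda>l. 2 ^ q * (p l div 2 ^ q) + p l mod 2 ^ q)"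
    using assms(2) idx_double_split(3)[OF assms(1)] by simp
  ultimately show "g \<in> Fs q"
    unfolding Fs_def using idx_double_split(1,2)[OF assms(1)] by blast
qed

lemma Fs_prefix_cong:
  assumes "\<And>l t. t \<le> 2 * q \<Longrightarrow> g l t = h l t"
  shows "g \<in> Fs q \<longleftrightarrow> h \<in> Fs q"
proof -
  obtain p where p: "p \<in> idx (2 * q)" "g \<in> dcube (2 * q) p" using ex_dcube by blast
  have "h \<in> dcube (2 * q) p" by (rule dcube_prefix_cong[OF p(2)]) (simp add: assms)
  moreover have "digit (2 * q) g = digit (2 * q) h" by (simp add: digit_def assms)
  ultimately show ?thesis using mem_Fs_iff[OF p] mem_Fs_iff[OF p(1)] by simp
qed

text \<open>Membership in \<open>Fs q\<close> depends only on the digits up to \<open>2 q\<close>, so \<open>F_prefix k g\<close>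
  collects the constraints that are decided by the first \<open>k\<close> digits of \<open>g\<close>.\<close>
definition F_prefix :: "nat \<Rightarrow> ('d::finite \<Rightarrow> dyad) \<Rightarrow> bool" where
  "F_prefix k g \<longleftrightarrow> (\<forall>s. 2 * ms s < k \<longrightarrow> g \<in> Fs (ms s))"

lemma F_prefix_cong:
  assumes "\<And>l t. t < k \<Longrightarrow> g l t = h l t"
  shows "F_prefix k g \<longleftrightarrow> F_prefix k h"
proof -
  have "g \<in> Fs (ms s) \<longleftrightarrow> h \<in> Fs (ms s)" if "2 * ms s < k" for s
    by (rule Fs_prefix_cong) (use that assms in simp)
  then show ?thesis unfolding F_prefix_def by blast
qed

lemma F_prefix_Suc: "F_prefix (Suc k) g \<longleftrightarrow> F_prefix k g \<and> (\<forall>s. 2 * ms s = k \<longrightarrow> g \<in> Fs (ms s))"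
  unfolding F_prefix_def by (auto simp: less_Suc_eq)

lemma F_prefix_if_mem_Fset: "g \<in> Fset \<Longrightarrow> F_prefix k g"
  by (simp add: F_prefix_def Fset_def)

definition flip_digit :: "'d \<Rightarrow> nat \<Rightarrow> ('d \<Rightarrow> dyad) \<Rightarrow> 'd \<Rightarrow> dyad" where
  "flip_digit l0 t h = h(l0 := (h l0)(t := \<not> h l0 t))"

lemma flip_digit_other: "(l, t') \<noteq> (l0, t) \<Longrightarrow> flip_digit l0 t h l t' = h l t'"
  by (auto simp: flip_digit_def)

lemma flip_digit_mem_Fs:
  assumes "h \<notin> Fs q"
  shows "flip_digit l0 (2 * q) h \<in> Fs q"
proof -
  obtain p where p: "p \<in> idx (2 * q)" "h \<in> dcube (2 * q) p" using ex_dcube by blast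
  have "flip_digit l0 (2 * q) h \<in> dcube (2 * q) p"
    by (rule dcube_prefix_cong[OF p(2)]) (simp add: flip_digit_other)
  moreover have "digit (2 * q) (flip_digit l0 (2 * q) h) = flip l0 (digit (2 * q) h)"
    by (auto simp: digit_def flip_digit_def flip_def fun_eq_iff)
  moreover have "chi (\<lambda>_. 1) (digit (2 * q) h) = - F_sign q p"
    using mem_Fs_iff[OF p] assms chi_cases F_sign_cases by (metis minus_minus)
  ultimately show ?thesis
    using mem_Fs_iff[OF p(1)] by (simp add: chi_flip digit_in_bin_vecs)
qed

text \<open>Beyond the first \<open>k\<close> digits, the constraints \<open>F\<^sub>m\<^sub>s\<close> are enforced one after the
  other, each by toggling digit \<open>2 m\<^sub>s\<close> of coordinate \<open>l0\<close>, which no earlier constraint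
  involves.\<close>
primrec repair :: "nat \<Rightarrow> 'd \<Rightarrow> ('d::finite \<Rightarrow> dyad) \<Rightarrow> nat \<Rightarrow> 'd \<Rightarrow> dyad" where
  "repair k l0 g 0 = g"
| "repair k l0 g (Suc j) =
    (let h = repair k l0 g j in
     if 2 * ms j < k \<or> h \<in> Fs (ms j) then h else flip_digit l0 (2 * ms j) h)"

lemma repair_Suc_same: "t \<noteq> 2 * ms j \<or> t < k \<Longrightarrow> repair k l0 g (Suc j) l t = repair k l0 g j l t"
  by (auto simp: Let_def flip_digit_other)

lemma repair_stable:
  assumes "j \<le> j'" "t < 2 * ms j"
  shows "repair k l0 g j' l t = repair k l0 g j l t"
  using assms(1)
proof (induction j' rule: dec_induct)
  case (step j')
  have "ms j \<le> ms j'" using step(1) strict_mono_ms by (simp add: strict_mono_less_eq)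
  then have "t \<noteq> 2 * ms j'" using assms(2) by simp
  then have "repair k l0 g (Suc j') l t = repair k l0 g j' l t" by (intro repair_Suc_same) simp
  then show ?case using step(3) by simp
qed simp

lemma repair_prefix: "t < k \<Longrightarrow> repair k l0 g j l t = g l t"
  by (induction j) (simp_all add: repair_Suc_same del: repair.simps(2))

lemma repair_mem_Fs:
  assumes "F_prefix k g"
  shows "repair k l0 g (Suc j) \<in> Fs (ms j)"
proof (cases "2 * ms j < k")
  case True
  then have "repair k l0 g (Suc j) \<in> Fs (ms j) \<longleftrightarrow> g \<in> Fs (ms j)"
    by (intro Fs_prefix_cong) (simp add: repair_prefix del: repair.simps(2))
  with True assms show ?thesis by (simp add: F_prefix_def)
next
  case False
  then show ?thesis by (simp add: Let_def flip_digit_mem_Fs)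
qed

lemma F_prefix_extends_to_Fset:
  fixes g :: "'d::finite \<Rightarrow> dyad"
  assumes "F_prefix k g"
  shows "\<exists>h\<in>Fset. \<forall>l t. t < k \<longrightarrow> h l t = g l t"
proof -
  fix l0 :: 'd
  define h where "h l t = repair k l0 g (Suc t) l t" for l t
  have "h l t = repair k l0 g (Suc j) l t" if "t \<le> 2 * ms j" for l t j
  proof (cases "t \<le> j")
    case True
    have "t < 2 * ms (Suc t)" using le_ms[of t] by simp
    with True show ?thesis unfolding h_def by (intro repair_stable[symmetric]) simp_all
  next
    case False
    have "t < 2 * ms (Suc j)" using that le_ms[of j] by simp
    with False show ?thesis unfolding h_def by (intro repair_stable) simp_all
  qed
  then have "h \<in> Fs (ms j)" for j
    using Fs_prefix_cong[of "ms j" h "repair k l0 g (Suc j)"] repair_mem_Fs[OF assms] by blast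
  then have "h \<in> Fset" by (simp add: Fset_def)
  moreover have "\<forall>l t. t < k \<longrightarrow> h l t = g l t"
    by (simp add: h_def repair_prefix del: repair.simps(2))
  ultimately show ?thesis by blast
qed

lemma Fset_ne_empty: "Fset \<noteq> {}"
  using F_prefix_extends_to_Fset[of 0 "\<lambda>_ _. False"] by (auto simp: F_prefix_def)

section \<open>The quasimeasure \<open>\<tau>\<^sub>F\<close>\<close>

definition meets_F :: "nat \<Rightarrow> ('d::finite \<Rightarrow> nat) \<Rightarrow> bool" where
  "meets_F k p \<longleftrightarrow> dcube k p \<inter> Fset \<noteq> {}"

definition F_children :: "nat \<Rightarrow> ('d::finite \<Rightarrow> nat) \<Rightarrow> ('d \<Rightarrow> nat) set" where
  "F_children k p = {\<sigma> \<in> bin_vecs. meets_F (Suc k) (child p \<sigma>)}"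

lemma finite_F_children [simp]: "finite (F_children k p)"
  by (simp add: F_children_def)

lemma meets_F_iff_F_prefix: "meets_F k p \<longleftrightarrow> F_prefix k (cube_pt k p)"
proof
  assume "meets_F k p"
  then obtain g where g: "g \<in> dcube k p" "g \<in> Fset" by (auto simp: meets_F_def)
  have "F_prefix k g \<longleftrightarrow> F_prefix k (cube_pt k p)"
    by (rule F_prefix_cong) (rule dcube_prefix_eq[OF g(1) cube_pt_in_dcube])
  then show "F_prefix k (cube_pt k p)" using F_prefix_if_mem_Fset[OF g(2)] by simp
next
  assume "F_prefix k (cube_pt k p)"
  then obtain h where h: "h \<in> Fset" "\<And>l t. t < k \<Longrightarrow> h l t = cube_pt k p l t"
    using F_prefix_extends_to_Fset by blast
  have "h \<in> dcube k p" by (rule dcube_prefix_cong[OF cube_pt_in_dcube]) (simp add: h(2))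
  with h(1) show "meets_F k p" by (auto simp: meets_F_def)
qed

lemma meets_F_child_iff:
  assumes "p \<in> idx k" "\<sigma> \<in> bin_vecs"
  shows "meets_F (Suc k) (child p \<sigma>) \<longleftrightarrow>
    meets_F k p \<and> (\<forall>s. 2 * ms s = k \<longrightarrow> chi (\<lambda>_. 1) \<sigma> = F_sign (ms s) p)"
proof -
  let ?g = "cube_pt (Suc k) (child p \<sigma>)"
  have g: "?g \<in> dcube k p" "digit k ?g = \<sigma>"
    using cube_pt_in_dcube[of "Suc k" "child p \<sigma>"] mem_dcube_child_iff[OF assms(2)] by blast+
  have "F_prefix k ?g \<longleftrightarrow> F_prefix k (cube_pt k p)"
    by (rule F_prefix_cong) (rule dcube_prefix_eq[OF g(1) cube_pt_in_dcube])
  moreover have "?g \<in> Fs (ms s) \<longleftrightarrow> chi (\<lambda>_. 1) \<sigma> = F_sign (ms s) p" if "2 * ms s = k" for s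
    using mem_Fs_iff[of p "ms s" ?g] assms(1) g that by simp
  ultimately show ?thesis unfolding meets_F_iff_F_prefix F_prefix_Suc by auto
qed

lemma F_children_eq_empty: "p \<in> idx k \<Longrightarrow> \<not> meets_F k p \<Longrightarrow> F_children k p = {}"
  by (auto simp: F_children_def meets_F_child_iff)

lemma F_children_unconstrained:
  "p \<in> idx k \<Longrightarrow> meets_F k p \<Longrightarrow> \<forall>s. 2 * ms s \<noteq> k \<Longrightarrow> F_children k p = bin_vecs"
  by (auto simp: F_children_def meets_F_child_iff)

lemma F_children_constrained:
  assumes "p \<in> idx k" "meets_F k p" "2 * ms s = k"
  shows "F_children k p = {\<sigma> \<in> bin_vecs. chi (\<lambda>_. 1) \<sigma> = F_sign (ms s) p}"
proof -
  have "ms s' = ms s" if "2 * ms s' = k" for s' using that assms(3) by simp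
  then show ?thesis using assms by (auto simp: F_children_def meets_F_child_iff)
qed

lemma F_children_ne_bin_vecs:
  assumes "p \<in> idx k" "2 * ms s = k"
  shows "F_children k p \<noteq> (bin_vecs :: ('d::finite \<Rightarrow> nat) set)"
proof (cases "meets_F k p")
  case True
  fix l0 :: 'd
  have "chi (\<lambda>_. 1) (flip l0 (\<lambda>_. 0)) = -1"
    using chi_flip[OF zero_in_bin_vecs, of "\<lambda>_. 1" l0] by simp
  then have "(\<lambda>_. 0) \<notin> F_children k p \<or> flip l0 (\<lambda>_. 0) \<notin> F_children k p"
    using F_children_constrained[OF assms(1) True assms(2)] F_sign_cases[of "ms s" p] by auto
  then show ?thesis using flip_in_bin_vecs[OF zero_in_bin_vecs, of l0] by auto
qed (metis F_children_eq_empty[OF assms(1)] bin_vecs_ne_empty)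

abbreviation tauF :: "nat \<Rightarrow> ('d::finite \<Rightarrow> nat) \<Rightarrow> real" where
  "tauF \<equiv> tauE Fset"

lemma tauF_child:
  assumes "p \<in> idx k" "\<sigma> \<in> bin_vecs"
  shows "tauF (Suc k) (child p \<sigma>) =
    (if \<sigma> \<in> F_children k p then tauF k p / card (F_children k p) else 0)"
proof -
  have parent: "(2 * p l + \<sigma> l) div 2 = p l" for l
    using assms(2) by (simp add: bin_vecs_def)
  have children: "{\<sigma>'. (\<forall>l. \<sigma>' l < 2) \<and> dcube (Suc k) (child p \<sigma>') \<inter> Fset \<noteq> {}} = F_children k p"
    by (auto simp: F_children_def meets_F_def bin_vecs_def)
  have "dcube (Suc k) (child p \<sigma>) \<inter> Fset = {} \<longleftrightarrow> \<sigma> \<notin> F_children k p"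
    using assms(2) by (auto simp: F_children_def meets_F_def)
  then show ?thesis by (simp only: tauE.simps parent children) simp
qed

declare tauE.simps(2) [simp del]

lemma tauF_pos: "p \<in> idx k \<Longrightarrow> meets_F k p \<Longrightarrow> 0 < tauF k p"
proof (induction k arbitrary: p)
  case (Suc k)
  obtain q \<sigma> where q: "q \<in> idx k" "\<sigma> \<in> bin_vecs" "p = child q \<sigma>"
    using idx_Suc_split_child[OF Suc.prems(1)] by blast
  then have "\<sigma> \<in> F_children k q" using Suc.prems(2) by (simp add: F_children_def)
  then have "meets_F k q" and "0 < card (F_children k q)"
    using F_children_eq_empty[OF q(1)] by (auto simp: card_gt_0_iff)
  then show ?case using Suc.IH[OF q(1)] tauF_child[OF q(1,2)] \<open>\<sigma> \<in> F_children k q\<close> q(3) by simp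
qed simp

lemma mem_idx_rank_of: "n \<in> idx (rank_of n)"
proof -
  have "n l < 2 ^ (\<Sum>l\<in>UNIV. n l)" for l
  proof -
    have "n l \<le> (\<Sum>l\<in>UNIV. n l)" by (rule member_le_sum) auto
    then have "(2::nat) ^ n l \<le> 2 ^ (\<Sum>l\<in>UNIV. n l)" by (rule power_increasing) simp
    with less_exp[of "n l"] show ?thesis by linarith
  qed
  then have "\<exists>k. \<forall>l. n l < 2 ^ k" by blast
  then have "\<forall>l. n l < 2 ^ (LEAST k. \<forall>l. n l < 2 ^ k)" by (rule LeastI_ex)
  then show ?thesis by (simp add: rank_of_def idx_def)
qed

lemma extend_top_ge_exp:
  assumes "v \<noteq> (\<lambda>_. 0)"
  shows "\<exists>l. 2 ^ k \<le> extend_top k n v l"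
proof -
  obtain l where "v l \<noteq> 0" using assms by auto
  then have "2 ^ k * 1 \<le> 2 ^ k * v l" by (intro mult_le_mono2) simp
  then show ?thesis by (metis le_add2 order_trans mult_1_right)
qed

lemma rank_of_extend_top:
  assumes "n \<in> idx k" "v \<in> bin_vecs" "v \<noteq> (\<lambda>_. 0)"
  shows "rank_of (extend_top k n v) = Suc k"
  unfolding rank_of_def
proof (rule Least_equality)
  show "\<forall>l. extend_top k n v l < 2 ^ Suc k"
    using extend_top_in_idx[OF assms(1,2)] by (simp add: idx_def)
next
  fix K assume K: "\<forall>l. extend_top k n v l < 2 ^ K"
  obtain l where "2 ^ k \<le> extend_top k n v l" using extend_top_ge_exp[OF assms(3)] by blast
  with K have "(2::nat) ^ k < 2 ^ K" by (meson le_less_trans)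
  then show "Suc k \<le> K" by (simp add: Suc_le_eq)
qed

lemma qhat_extend_top:
  assumes "n \<in> idx k" "v \<in> bin_vecs" "v \<noteq> (\<lambda>_. 0)"
  shows "qhat \<tau> (extend_top k n v) =
    (\<Sum>p\<in>idx k. Wk k n p * (\<Sum>\<sigma>\<in>bin_vecs. chi v \<sigma> * \<tau> (Suc k) (child p \<sigma>)))"
proof -
  have "qhat \<tau> (extend_top k n v) =
      (\<Sum>p\<in>idx k. \<Sum>\<sigma>\<in>bin_vecs. Wk (Suc k) (extend_top k n v) (child p \<sigma>) * \<tau> (Suc k) (child p \<sigma>))"
    by (simp add: qhat_def rank_of_extend_top[OF assms] sum_idx_Suc_child)
  also have "\<dots> = (\<Sum>p\<in>idx k. Wk k n p * (\<Sum>\<sigma>\<in>bin_vecs. chi v \<sigma> * \<tau> (Suc k) (child p \<sigma>)))"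
    by (intro sum.cong refl) (simp add: Wk_extend_top_child assms sum_distrib_left mult.assoc)
  finally show ?thesis .
qed

lemma F_children_chi_sum_eq_0:
  assumes "p \<in> idx k" "v \<in> bin_vecs" "v \<noteq> (\<lambda>_. 0)"
    and "(\<forall>s. 2 * ms s \<noteq> k) \<or> v \<noteq> (\<lambda>_. 1)"
  shows "(\<Sum>\<sigma>\<in>F_children k p. chi v \<sigma>) = 0"
proof (cases "meets_F k p")
  case True
  show ?thesis
  proof (cases "\<forall>s. 2 * ms s \<noteq> k")
    case False
    then obtain s where s: "2 * ms s = k" by auto
    with assms(4) have "v \<noteq> (\<lambda>_. 1)" by auto
    then show ?thesis
      using F_children_constrained[OF assms(1) True s] chi_sum_parity_class_eq_0[OF assms(2,3)] by simp
  qed (use F_children_unconstrained[OF assms(1) True] chi_sum_eq_0[OF assms(2,3)] in simp)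
qed (simp add: F_children_eq_empty[OF assms(1)])

lemma qhat_tauF_extend_top_eq_0:
  assumes "n \<in> idx k" "v \<in> bin_vecs" "v \<noteq> (\<lambda>_. 0)"
    and "(\<forall>s. 2 * ms s \<noteq> k) \<or> v \<noteq> (\<lambda>_. 1)"
  shows "qhat tauF (extend_top k n v) = 0"
proof -
  have "(\<Sum>\<sigma>\<in>bin_vecs. chi v \<sigma> * tauF (Suc k) (child p \<sigma>)) = 0" if "p \<in> idx k" for p
  proof -
    let ?c = "tauF k p / card (F_children k p)"
    have "(\<Sum>\<sigma>\<in>bin_vecs. chi v \<sigma> * tauF (Suc k) (child p \<sigma>)) =
        (\<Sum>\<sigma>\<in>bin_vecs. if \<sigma> \<in> F_children k p then chi v \<sigma> * ?c else 0)"
      by (intro sum.cong refl) (simp add: tauF_child that)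
    also have "\<dots> = (\<Sum>\<sigma>\<in>{\<sigma> \<in> bin_vecs. \<sigma> \<in> F_children k p}. chi v \<sigma> * ?c)"
      by (simp only: sum.inter_filter[OF finite_bin_vecs])
    also have "{\<sigma> \<in> bin_vecs. \<sigma> \<in> F_children k p} = F_children k p"
      by (auto simp: F_children_def)
    also have "(\<Sum>\<sigma>\<in>F_children k p. chi v \<sigma> * ?c) = (\<Sum>\<sigma>\<in>F_children k p. chi v \<sigma>) * ?c"
      by (rule sum_distrib_right[symmetric])
    finally show ?thesis by (simp add: F_children_chi_sum_eq_0[OF that assms(2-4)])
  qed
  then show ?thesis by (simp add: qhat_extend_top[OF assms(1-3)])
qed

section \<open>Series vanishing off \<open>F\<close>\<close>

lemma top_block_eq_0_if_coeffs_vanish: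
  assumes "\<And>n. n \<in> idx k \<Longrightarrow> a (extend_top k n v) = 0"
  shows "top_block a k v g = 0"
  by (simp add: top_block_def assms)

lemma dyadic_psum_child_eq_if_high_coeffs_vanish:
  assumes "\<And>n. (\<exists>l. 2 ^ k \<le> n l) \<Longrightarrow> a n = 0" "\<sigma> \<in> bin_vecs"
  shows "dyadic_psum a (Suc k) (cube_pt (Suc k) (child p \<sigma>)) = dyadic_psum a k (cube_pt k p)"
proof -
  have "(\<Sum>v\<in>bin_vecs. chi v \<sigma> * top_block a k v (cube_pt k p)) =
      (\<Sum>v\<in>{\<lambda>_. 0}. chi v \<sigma> * top_block a k v (cube_pt k p))"
    by (intro sum.mono_neutral_right)
      (auto intro!: top_block_eq_0_if_coeffs_vanish assms(1) extend_top_ge_exp)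
  then show ?thesis by (simp add: dyadic_psum_child[OF assms(2)] top_block_zero)
qed

locale F_supported_series =
  fixes \<psi> :: "('d::finite \<Rightarrow> nat) \<Rightarrow> real"
  assumes psum_zero_off_F: "\<not> meets_F k p \<Longrightarrow> dyadic_psum \<psi> k (cube_pt k p) = 0"
    and coeff_eq_0: "qhat tauF n = 0 \<Longrightarrow> \<psi> n = 0"
begin

lemma top_block_eq_0:
  assumes "v \<in> bin_vecs" "v \<noteq> (\<lambda>_. 0)" "(\<forall>s. 2 * ms s \<noteq> k) \<or> v \<noteq> (\<lambda>_. 1)"
  shows "top_block \<psi> k v g = 0"
  using assms by (intro top_block_eq_0_if_coeffs_vanish coeff_eq_0 qhat_tauF_extend_top_eq_0)

text \<open>At an unconstrained level only the character \<open>0\<close> survives, at the level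
  \<open>2 m\<^sub>s\<close> also the character \<open>1\<close>, which is constant on the children meeting \<open>F\<close>.\<close>
lemma dyadic_psum_const_on_F_children:
  assumes "p \<in> idx k" "meets_F k p"
  shows "\<exists>X. \<forall>\<sigma>\<in>F_children k p. dyadic_psum \<psi> (Suc k) (cube_pt (Suc k) (child p \<sigma>)) = X"
proof (cases "\<forall>s. 2 * ms s \<noteq> k")
  case True
  have "dyadic_psum \<psi> (Suc k) (cube_pt (Suc k) (child p \<sigma>)) = dyadic_psum \<psi> k (cube_pt k p)"
    if "\<sigma> \<in> bin_vecs" for \<sigma>
  proof -
    have "(\<Sum>v\<in>bin_vecs. chi v \<sigma> * top_block \<psi> k v (cube_pt k p)) =
        (\<Sum>v\<in>{\<lambda>_. 0}. chi v \<sigma> * top_block \<psi> k v (cube_pt k p))"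
      using True by (intro sum.mono_neutral_right) (auto intro!: top_block_eq_0)
    then show ?thesis by (simp add: dyadic_psum_child[OF that] top_block_zero)
  qed
  then show ?thesis by (auto simp: F_children_def)
next
  case False
  then obtain s where s: "2 * ms s = k" by auto
  have "dyadic_psum \<psi> (Suc k) (cube_pt (Suc k) (child p \<sigma>)) =
      dyadic_psum \<psi> k (cube_pt k p) + F_sign (ms s) p * top_block \<psi> k (\<lambda>_. 1) (cube_pt k p)"
    if "\<sigma> \<in> F_children k p" for \<sigma>
  proof -
    have \<sigma>: "\<sigma> \<in> bin_vecs" "chi (\<lambda>_. 1) \<sigma> = F_sign (ms s) p"
      using that F_children_constrained[OF assms(1,2) s] by auto
    have ones: "(\<lambda>_. 1) \<in> bin_vecs" "(\<lambda>_. 1) \<noteq> (\<lambda>_::'d. 0::nat)"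
      by (auto simp: bin_vecs_def fun_eq_iff)
    have "(\<Sum>v\<in>bin_vecs. chi v \<sigma> * top_block \<psi> k v (cube_pt k p)) =
        (\<Sum>v\<in>{\<lambda>_. 0, \<lambda>_. 1}. chi v \<sigma> * top_block \<psi> k v (cube_pt k p))"
      using ones by (intro sum.mono_neutral_right) (auto intro!: top_block_eq_0)
    then show ?thesis using ones(2) \<sigma>(2) by (simp add: dyadic_psum_child[OF \<sigma>(1)] top_block_zero)
  qed
  then show ?thesis by blast
qed

lemma dyadic_psum_F_child:
  assumes "p \<in> idx k" "\<sigma> \<in> F_children k p"
  shows "dyadic_psum \<psi> (Suc k) (cube_pt (Suc k) (child p \<sigma>)) =
    2 ^ CARD('d) * dyadic_psum \<psi> k (cube_pt k p) / card (F_children k p)"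
proof -
  have "meets_F k p" using assms(2) F_children_eq_empty[OF assms(1)] by (metis empty_iff)
  then obtain X where X: "\<forall>\<sigma>'\<in>F_children k p. dyadic_psum \<psi> (Suc k) (cube_pt (Suc k) (child p \<sigma>')) = X"
    using dyadic_psum_const_on_F_children[OF assms(1)] by blast
  have "2 ^ CARD('d) * dyadic_psum \<psi> k (cube_pt k p) =
      (\<Sum>\<sigma>'\<in>bin_vecs. dyadic_psum \<psi> (Suc k) (cube_pt (Suc k) (child p \<sigma>')))"
    by (rule dyadic_psum_children_sum[symmetric])
  also have "\<dots> = (\<Sum>\<sigma>'\<in>F_children k p. dyadic_psum \<psi> (Suc k) (cube_pt (Suc k) (child p \<sigma>')))"
    by (intro sum.mono_neutral_right) (auto simp: F_children_def intro: psum_zero_off_F)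
  also have "\<dots> = (\<Sum>\<sigma>'\<in>F_children k p. X)"
    using X by (intro sum.cong) auto
  finally have "2 ^ CARD('d) * dyadic_psum \<psi> k (cube_pt k p) = card (F_children k p) * X"
    by simp
  moreover have "card (F_children k p) \<noteq> 0" using assms(2) by auto
  ultimately show ?thesis using X assms(2) by (simp add: field_simps)
qed

lemma dyadic_psum_eq_scaled_tauF:
  "p \<in> idx k \<Longrightarrow> dyadic_psum \<psi> k (cube_pt k p) = \<psi> (\<lambda>_. 0) * 2 ^ (k * CARD('d)) * tauF k p"
proof (induction k arbitrary: p)
  case 0
  then show ?case by (simp add: idx_0 dyadic_psum_0)
next
  case (Suc k)
  obtain q \<sigma> where q: "q \<in> idx k" "\<sigma> \<in> bin_vecs" "p = child q \<sigma>"
    using idx_Suc_split_child[OF Suc.prems] by blast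
  show ?case
  proof (cases "\<sigma> \<in> F_children k q")
    case True
    then show ?thesis
      using dyadic_psum_F_child[OF q(1) True] Suc.IH[OF q(1)] tauF_child[OF q(1,2)]
      by (simp add: q(3) power_add)
  next
    case False
    then show ?thesis
      using psum_zero_off_F[of "Suc k" p] tauF_child[OF q(1,2)] q by (simp add: F_children_def)
  qed
qed

lemma coeff_eq_scaled_qhat_tauF: "\<psi> n = \<psi> (\<lambda>_. 0) * qhat tauF n"
proof -
  let ?K = "rank_of n"
  have "2 ^ (?K * CARD('d)) * \<psi> n = (\<Sum>m\<in>idx ?K. Wk ?K n m * dyadic_psum \<psi> ?K (cube_pt ?K m))"
    by (rule coeff_eq_from_dyadic_psum[OF mem_idx_rank_of])
  also have "\<dots> = (\<Sum>m\<in>idx ?K. 2 ^ (?K * CARD('d)) * \<psi> (\<lambda>_. 0) * (Wk ?K n m * tauF ?K m))"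
    by (intro sum.cong refl) (simp add: dyadic_psum_eq_scaled_tauF)
  also have "\<dots> = 2 ^ (?K * CARD('d)) * (\<psi> (\<lambda>_. 0) * qhat tauF n)"
    by (simp add: qhat_def Let_def sum_distrib_left mult_ac)
  finally show ?thesis by simp
qed

text \<open>At the level \<open>k = 2 m\<^sub>s\<close> half of the children of a cube meeting \<open>F\<close> miss \<open>F\<close>;
  if the top blocks vanish there, the partial sum on such a child equals the one on the parent,
  which is therefore \<open>0\<close>, while \<open>\<tau>\<^sub>F\<close> is positive on the parent.\<close>
lemma constant_coeff_eq_0:
  assumes high: "\<And>n. (\<exists>l. 2 ^ (2 * ms s) \<le> n l) \<Longrightarrow> \<psi> n = 0"
  shows "\<psi> (\<lambda>_. 0) = 0"
proof -
  define k where "k = 2 * ms s"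
  obtain h where "h \<in> (Fset :: ('d \<Rightarrow> dyad) set)" using Fset_ne_empty by blast
  moreover obtain p where p: "p \<in> idx k" "h \<in> dcube k p" using ex_dcube by blast
  ultimately have "meets_F k p" by (auto simp: meets_F_def)
  have "F_children k p \<subseteq> bin_vecs" by (auto simp: F_children_def)
  with F_children_ne_bin_vecs[OF p(1) k_def[symmetric]]
  obtain \<sigma> where \<sigma>: "\<sigma> \<in> bin_vecs" "\<sigma> \<notin> F_children k p" by blast
  have "dyadic_psum \<psi> k (cube_pt k p) = dyadic_psum \<psi> (Suc k) (cube_pt (Suc k) (child p \<sigma>))"
    using high \<sigma>(1) unfolding k_def by (intro dyadic_psum_child_eq_if_high_coeffs_vanish[symmetric])
  also have "\<dots> = 0"
    using \<sigma> by (intro psum_zero_off_F) (simp add: F_children_def)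
  finally show ?thesis
    using dyadic_psum_eq_scaled_tauF[OF p(1)] tauF_pos[OF p(1) \<open>meets_F k p\<close>] by simp
qed

lemma constant_coeff_eq_0_if_dominated:
  fixes \<epsilon> :: "('d \<Rightarrow> nat) \<Rightarrow> real"
  assumes dominated: "\<And>n. \<bar>\<psi> n\<bar> \<le> \<epsilon> n * \<bar>qhat tauF n\<bar>"
    and small: "\<forall>\<delta>>0. \<exists>M. \<forall>n. (\<exists>l. M \<le> n l) \<longrightarrow> \<bar>\<epsilon> n\<bar> < \<delta>"
  shows "\<psi> (\<lambda>_. 0) = 0"
proof (rule ccontr)
  assume "\<psi> (\<lambda>_. 0) \<noteq> 0"
  then have "0 < \<bar>\<psi> (\<lambda>_. 0)\<bar>" by simp
  with small obtain M where M: "\<forall>n. (\<exists>l. M \<le> n l) \<longrightarrow> \<bar>\<epsilon> n\<bar> < \<bar>\<psi> (\<lambda>_. 0)\<bar>"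
    by blast
  have "qhat tauF n = 0" if "\<exists>l. 2 ^ (2 * ms M) \<le> n l" for n :: "'d \<Rightarrow> nat"
  proof (rule ccontr)
    assume "qhat tauF n \<noteq> 0"
    have "M \<le> 2 ^ (2 * ms M)" using le_ms[of M] less_exp[of "2 * ms M"] by linarith
    with that have "\<bar>\<epsilon> n\<bar> * \<bar>qhat tauF n\<bar> < \<bar>\<psi> (\<lambda>_. 0)\<bar> * \<bar>qhat tauF n\<bar>"
      using M \<open>qhat tauF n \<noteq> 0\<close> by (intro mult_strict_right_mono) (auto intro: le_trans)
    moreover have "\<bar>\<psi> (\<lambda>_. 0)\<bar> * \<bar>qhat tauF n\<bar> \<le> \<epsilon> n * \<bar>qhat tauF n\<bar>"
      using dominated[of n] coeff_eq_scaled_qhat_tauF[of n] by (simp add: abs_mult)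
    moreover have "\<epsilon> n * \<bar>qhat tauF n\<bar> \<le> \<bar>\<epsilon> n\<bar> * \<bar>qhat tauF n\<bar>"
      by (simp add: mult_right_mono)
    ultimately show False by linarith
  qed
  then have "\<psi> n = 0" if "\<exists>l. 2 ^ (2 * ms M) \<le> n l" for n
    using that coeff_eq_0 by blast
  then show False using constant_coeff_eq_0 \<open>\<psi> (\<lambda>_. 0) \<noteq> 0\<close> by blast
qed

end

theorem theorem3:
  fixes \<psi> :: "('d::finite \<Rightarrow> nat) \<Rightarrow> real"
  assumes d2: "CARD('d) \<ge> 2"
    and conv: "(\<forall>g. g \<notin> (Fset :: ('d \<Rightarrow> dyad) set) \<longrightarrow> conv_rect \<psi> g 0)
             \<or> (\<forall>g. g \<notin> (Fset :: ('d \<Rightarrow> dyad) set) \<longrightarrow> conv_cube \<psi> g 0)"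
    and small: "\<exists>\<epsilon> :: ('d \<Rightarrow> nat) \<Rightarrow> real.
       (\<forall>\<delta>>0. \<exists>M. \<forall>n. (\<exists>l. M \<le> n l) \<longrightarrow> \<bar>\<epsilon> n\<bar> < \<delta>) \<and>
       (\<forall>n. \<bar>\<psi> n\<bar> \<le> \<epsilon> n * \<bar>qhat (tauE (Fset :: ('d \<Rightarrow> dyad) set)) n\<bar>)"
  shows "\<forall>n. \<psi> n = 0"
proof -
  \<comment> \<open>The argument works for every dimension.\<close>
  obtain \<epsilon> where \<epsilon>: "\<forall>\<delta>>0. \<exists>M. \<forall>n. (\<exists>l. M \<le> n l) \<longrightarrow> \<bar>\<epsilon> n\<bar> < \<delta>"
    and dominated: "\<And>n. \<bar>\<psi> n\<bar> \<le> \<epsilon> n * \<bar>qhat tauF n\<bar>"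
    using small by blast
  interpret F_supported_series \<psi>
  proof
    fix k and p :: "'d \<Rightarrow> nat" assume "\<not> meets_F k p"
    with conv show "dyadic_psum \<psi> k (cube_pt k p) = 0"
      by (intro dyadic_psum_eq_0_off[where F = Fset] dyadic_psum_tendsto_0) (auto simp: meets_F_def)
  next
    fix n :: "'d \<Rightarrow> nat" assume "qhat tauF n = 0"
    with dominated[of n] show "\<psi> n = 0" by simp
  qed
  show ?thesis
    using coeff_eq_scaled_qhat_tauF constant_coeff_eq_0_if_dominated[OF dominated \<epsilon>] by simp
qed

end
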